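(* Under the hypotheses of the context, for every $T\ge1$, $$\sum_{t=0}^{T-1}\mathbb E\|x^t-\hat x^t\|^2\le\eta_g^2\Big(\sum_{s=1}^{T-1}(1-\delta_s)^s\Big)\sum_{t=0}^{T-2}\mathbb E\|\bar\Delta^t\|^2 .$$
   Context: A (possibly random) map $Q:\mathbb R^d\to\mathbb R^d$ is a quantizer with compression parameter $\delta\in(0,1]$ if $\mathbb E_Q\|Q(x)-x\|^2\le(1-\delta)\|x\|^2$ for all $x$, where $\mathbb E_Q$ is expectation over the internal randomness of $Q$; it is unbiased if $\mathbb E_Q[Q(x)]=x$ for all $x$. Hypotheses: $Q_s$ is an unbiased quantizer with parameter $\delta_s\in(0,1]$, $\eta_g>0$, $(\bar\Delta^t)_{t\ge0}$ are random vectors in $\mathbb R^d$ with finite second moments, $x^{t+1}=x^t+\eta_g\bar\Delta^t$, $\hat x^{t+1}=\hat x^t+Q_s(x^{t+1}-\hat x^t)$, $\hat x^0=x^0$, each application of $Q_s$ uses fresh internal randomness independent of $x^{t+1}-\hat x^t$, and $\mathbb E\langle x^t-\hat x^t,\bar\Delta^t\rangle=0$ for all $t$. *)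

theory Defs
  imports "HOL-Probability.Probability"
begin

text \<open>A random map Q : R^d -> R^d is modelled as a jointly measurable function
  of an internal randomness r (distributed according to the probability measure N)
  and the input x.\<close>

definition quantizer :: "'r measure \<Rightarrow> ('r \<Rightarrow> 'a::euclidean_space \<Rightarrow> 'a) \<Rightarrow> real \<Rightarrow> bool" where
  "quantizer N Q \<delta> \<longleftrightarrow>
     prob_space N \<and>
     (\<lambda>(r, x). Q r x) \<in> borel_measurable (N \<Otimes>\<^sub>M borel) \<and>
     0 < \<delta> \<and> \<delta> \<le> 1 \<and>
     (\<forall>x. (\<integral>\<^sup>+ r. ennreal ((norm (Q r x - x))\<^sup>2) \<partial>N) \<le> ennreal ((1 - \<delta>) * (norm x)\<^sup>2))"

definition unbiased_quantizer :: "'r measure \<Rightarrow> ('r \<Rightarrow> 'a::euclidean_space \<Rightarrow> 'a) \<Rightarrow> bool" where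
  "unbiased_quantizer N Q \<longleftrightarrow>
     (\<forall>x. integrable N (\<lambda>r. Q r x) \<and> (\<integral>r. Q r x \<partial>N) = x)"

end

theory Submission imports Defs begin

text \<open>Let \<open>e t = x t - xh t\<close>, so \<open>e 0 = 0\<close> and \<open>e (t+1) = v - Q\<^sub>s v\<close> with \<open>v = e t + \<eta>\<^sub>g \<Delta> t\<close>.
  Because the randomness of \<open>Q\<^sub>s\<close> is independent of \<open>v\<close>, the compression bound holds in
  expectation: \<open>E\<parallel>e (t+1)\<parallel>\<^sup>2 \<le> q E\<parallel>v\<parallel>\<^sup>2\<close> with \<open>q = 1 - \<delta>\<^sub>s\<close>; the orthogonality hypothesis removes the
  cross term, so \<open>E\<parallel>e (t+1)\<parallel>\<^sup>2 \<le> q (E\<parallel>e t\<parallel>\<^sup>2 + \<eta>\<^sub>g\<^sup>2 E\<parallel>\<Delta> t\<parallel>\<^sup>2)\<close>. Unrolling this linear recurrence and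
  exchanging the order of summation gives the bound.\<close>

lemma linear_recurrence_le_convolution:
  fixes a E :: "nat \<Rightarrow> real" and q :: real
  assumes q: "0 \<le> q" and a0: "a 0 = 0"
    and st: "\<And>t. a (Suc t) \<le> q * (a t + E t)"
  shows "a t \<le> (\<Sum>j<t. q ^ (t - j) * E j)"
proof (induction t)
  case 0 then show ?case using a0 by simp
next
  case (Suc t)
  have "a (Suc t) \<le> q * (a t + E t)" by (rule st)
  also have "\<dots> \<le> q * ((\<Sum>j<t. q ^ (t - j) * E j) + E t)"
    using Suc q by (intro mult_left_mono) auto
  also have "\<dots> = (\<Sum>j<t. q ^ (Suc t - j) * E j) + q ^ (Suc t - t) * E t"
    by (simp add: sum_distrib_left distrib_left Suc_diff_le mult.assoc)
  also have "\<dots> = (\<Sum>j<Suc t. q ^ (Suc t - j) * E j)" by simp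
  finally show ?case .
qed

lemma sum_convolution_le:
  fixes E :: "nat \<Rightarrow> real" and q :: real
  assumes q: "0 \<le> q" and E: "\<And>j. 0 \<le> E j" and T: "T \<ge> 1"
  shows "(\<Sum>t<T. \<Sum>j<t. q ^ (t - j) * E j) \<le> (\<Sum>s=1..T-1. q ^ s) * (\<Sum>j<T-1. E j)"
proof -
  define n where "n = T - 1"
  have T_eq: "{..<T} = {..n}" using T by (auto simp: n_def)
  have tail: "(\<Sum>t=Suc j..n. q ^ (t - j)) \<le> (\<Sum>s=1..n. q ^ s)" for j
  proof -
    have "inj_on (\<lambda>t. t - j) {Suc j..n}" by (auto simp: inj_on_def)
    then have "(\<Sum>t=Suc j..n. q ^ (t - j)) = (\<Sum>s\<in>(\<lambda>t. t - j) ` {Suc j..n}. q ^ s)"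
      by (simp add: sum.reindex)
    also have "\<dots> \<le> (\<Sum>s=1..n. q ^ s)" by (rule sum_mono2) (auto simp: q)
    finally show ?thesis .
  qed
  have "(\<Sum>t<T. \<Sum>j<t. q ^ (t - j) * E j) = (\<Sum>j<n. (\<Sum>t=Suc j..n. q ^ (t - j)) * E j)"
    unfolding T_eq by (simp add: sum.nested_swap' sum_distrib_right)
  also have "\<dots> \<le> (\<Sum>j<n. (\<Sum>s=1..n. q ^ s) * E j)"
    by (intro sum_mono mult_right_mono tail E)
  finally show ?thesis by (simp add: n_def sum_distrib_left)
qed

lemma quantizer_nn_integral_error_le:
  fixes Q :: "'r \<Rightarrow> 'a::euclidean_space \<Rightarrow> 'a" and \<xi> :: "'w \<Rightarrow> 'r" and v :: "'w \<Rightarrow> 'a"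
  assumes M: "prob_space M" and Q: "quantizer N Q \<delta>"
    and \<xi>: "\<xi> \<in> measurable M N" and v: "v \<in> borel_measurable M"
    and indep: "distr M (N \<Otimes>\<^sub>M borel) (\<lambda>\<omega>. (\<xi> \<omega>, v \<omega>)) = N \<Otimes>\<^sub>M distr M borel v"
  shows "(\<integral>\<^sup>+\<omega>. ennreal ((norm (v \<omega> - Q (\<xi> \<omega>) (v \<omega>)))\<^sup>2) \<partial>M)
           \<le> (\<integral>\<^sup>+\<omega>. ennreal ((1 - \<delta>) * (norm (v \<omega>))\<^sup>2) \<partial>M)"
proof -
  interpret M: prob_space M by (rule M)
  from Q have probN: "prob_space N"
    and Qm: "(\<lambda>(r, y). Q r y) \<in> borel_measurable (N \<Otimes>\<^sub>M borel)"
    and QB: "\<And>y. (\<integral>\<^sup>+ r. ennreal ((norm (Q r y - y))\<^sup>2) \<partial>N) \<le> ennreal ((1 - \<delta>) * (norm y)\<^sup>2)"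
    unfolding quantizer_def by auto
  interpret N: prob_space N by (rule probN)
  interpret V: prob_space "distr M borel v" by (rule M.prob_space_distr[OF v])
  interpret NV: pair_sigma_finite N "distr M borel v"
    by (intro pair_sigma_finite.intro N.sigma_finite_measure_axioms V.sigma_finite_measure_axioms)
  define f where "f p = ennreal ((norm (snd p - Q (fst p) (snd p)))\<^sup>2)" for p
  have "(\<lambda>p. Q (fst p) (snd p)) \<in> borel_measurable (N \<Otimes>\<^sub>M borel)"
    using Qm by (simp add: case_prod_beta')
  then have fm: "f \<in> borel_measurable (N \<Otimes>\<^sub>M borel)" unfolding f_def by measurable
  have pm: "(\<lambda>\<omega>. (\<xi> \<omega>, v \<omega>)) \<in> measurable M (N \<Otimes>\<^sub>M borel)"
    using \<xi> v by (rule measurable_Pair)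
  have "(\<integral>\<^sup>+\<omega>. ennreal ((norm (v \<omega> - Q (\<xi> \<omega>) (v \<omega>)))\<^sup>2) \<partial>M) = (\<integral>\<^sup>+\<omega>. f (\<xi> \<omega>, v \<omega>) \<partial>M)"
    by (simp add: f_def)
  also have "\<dots> = integral\<^sup>N (distr M (N \<Otimes>\<^sub>M borel) (\<lambda>\<omega>. (\<xi> \<omega>, v \<omega>))) f"
    using pm fm by (simp add: nn_integral_distr)
  also have "\<dots> = (\<integral>\<^sup>+ y. (\<integral>\<^sup>+ r. f (r, y) \<partial>N) \<partial>distr M borel v)"
    unfolding indep using fm by (simp add: NV.nn_integral_snd)
  also have "\<dots> \<le> (\<integral>\<^sup>+ y. ennreal ((1 - \<delta>) * (norm y)\<^sup>2) \<partial>distr M borel v)"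
    using QB by (intro nn_integral_mono) (simp add: f_def norm_minus_commute)
  also have "\<dots> = (\<integral>\<^sup>+\<omega>. ennreal ((1 - \<delta>) * (norm (v \<omega>))\<^sup>2) \<partial>M)"
    using v by (simp add: nn_integral_distr)
  finally show ?thesis .
qed

lemma integrable_inner_of_square_integrable:
  fixes e d :: "'w \<Rightarrow> 'a::euclidean_space"
  assumes "e \<in> borel_measurable M" "d \<in> borel_measurable M"
    and ei: "integrable M (\<lambda>\<omega>. (norm (e \<omega>))\<^sup>2)" and di: "integrable M (\<lambda>\<omega>. (norm (d \<omega>))\<^sup>2)"
  shows "integrable M (\<lambda>\<omega>. inner (e \<omega>) (d \<omega>))"
proof (rule Bochner_Integration.integrable_bound[OF Bochner_Integration.integrable_add[OF ei di]])
  show "(\<lambda>\<omega>. inner (e \<omega>) (d \<omega>)) \<in> borel_measurable M" using assms(1,2) by measurable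
  show "AE \<omega> in M. norm (inner (e \<omega>) (d \<omega>)) \<le> norm ((norm (e \<omega>))\<^sup>2 + (norm (d \<omega>))\<^sup>2)"
  proof (rule AE_I2)
    fix \<omega>
    have "\<bar>inner (e \<omega>) (d \<omega>)\<bar> \<le> norm (e \<omega>) * norm (d \<omega>)" by (rule Cauchy_Schwarz_ineq2)
    also have "\<dots> \<le> (norm (e \<omega>))\<^sup>2 + (norm (d \<omega>))\<^sup>2"
      using sum_squares_bound[of "norm (e \<omega>)" "norm (d \<omega>)"]
        mult_nonneg_nonneg[OF norm_ge_zero norm_ge_zero, of "e \<omega>" "d \<omega>"] by linarith
    finally show "norm (inner (e \<omega>) (d \<omega>)) \<le> norm ((norm (e \<omega>))\<^sup>2 + (norm (d \<omega>))\<^sup>2)" by simp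
  qed
qed

lemma integral_norm_add_scaleR_orthogonal:
  fixes e d :: "'w \<Rightarrow> 'a::euclidean_space" and c :: real
  assumes "e \<in> borel_measurable M" "d \<in> borel_measurable M"
    and ei: "integrable M (\<lambda>\<omega>. (norm (e \<omega>))\<^sup>2)" and di: "integrable M (\<lambda>\<omega>. (norm (d \<omega>))\<^sup>2)"
    and orth: "(\<integral>\<omega>. inner (e \<omega>) (d \<omega>) \<partial>M) = 0"
  shows "integrable M (\<lambda>\<omega>. (norm (e \<omega> + c *\<^sub>R d \<omega>))\<^sup>2)"
    and "(\<integral>\<omega>. (norm (e \<omega> + c *\<^sub>R d \<omega>))\<^sup>2 \<partial>M)
           = (\<integral>\<omega>. (norm (e \<omega>))\<^sup>2 \<partial>M) + c\<^sup>2 * (\<integral>\<omega>. (norm (d \<omega>))\<^sup>2 \<partial>M)"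
proof -
  have ii: "integrable M (\<lambda>\<omega>. inner (e \<omega>) (d \<omega>))"
    using assms(1-4) by (rule integrable_inner_of_square_integrable)
  have sq: "(norm (e \<omega> + c *\<^sub>R d \<omega>))\<^sup>2
      = (norm (e \<omega>))\<^sup>2 + 2 * c * inner (e \<omega>) (d \<omega>) + c\<^sup>2 * (norm (d \<omega>))\<^sup>2" for \<omega>
  proof -
    have "(norm (e \<omega> + c *\<^sub>R d \<omega>))\<^sup>2 = inner (e \<omega> + c *\<^sub>R d \<omega>) (e \<omega> + c *\<^sub>R d \<omega>)"
      by (rule power2_norm_eq_inner)
    also have "\<dots> = inner (e \<omega>) (e \<omega>) + 2 * c * inner (e \<omega>) (d \<omega>) + c\<^sup>2 * inner (d \<omega>) (d \<omega>)"
      by (simp add: inner_add_left inner_add_right inner_commute[of "d \<omega>" "e \<omega>"]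
          power2_eq_square algebra_simps)
    finally show ?thesis by (simp add: power2_norm_eq_inner)
  qed
  show "integrable M (\<lambda>\<omega>. (norm (e \<omega> + c *\<^sub>R d \<omega>))\<^sup>2)"
    unfolding sq using ei ii di by auto
  show "(\<integral>\<omega>. (norm (e \<omega> + c *\<^sub>R d \<omega>))\<^sup>2 \<partial>M)
           = (\<integral>\<omega>. (norm (e \<omega>))\<^sup>2 \<partial>M) + c\<^sup>2 * (\<integral>\<omega>. (norm (d \<omega>))\<^sup>2 \<partial>M)"
    unfolding sq using ei ii di orth by simp
qed

lemma integrable_and_integral_le_of_nn_integral_le:
  fixes f :: "'w \<Rightarrow> real"
  assumes "f \<in> borel_measurable M" "\<And>\<omega>. 0 \<le> f \<omega>"
    and le: "(\<integral>\<^sup>+\<omega>. ennreal (f \<omega>) \<partial>M) \<le> ennreal c" and "0 \<le> c"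
  shows "integrable M f" and "integral\<^sup>L M f \<le> c"
proof -
  show fi: "integrable M f"
    using assms by (intro integrableI_nonneg) (auto simp: top.not_eq_extremum intro: le_less_trans)
  have "ennreal (integral\<^sup>L M f) = (\<integral>\<^sup>+\<omega>. ennreal (f \<omega>) \<partial>M)"
    using assms(2) by (simp add: nn_integral_eq_integral[OF fi])
  with le have "ennreal (integral\<^sup>L M f) \<le> ennreal c" by simp
  with \<open>0 \<le> c\<close> show "integral\<^sup>L M f \<le> c" by (simp add: ennreal_le_iff)
qed

lemma quantized_error_step:
  fixes Q :: "'r \<Rightarrow> 'a::euclidean_space \<Rightarrow> 'a" and \<xi> :: "'w \<Rightarrow> 'r"
    and e d :: "'w \<Rightarrow> 'a" and c :: real
  defines "v \<equiv> \<lambda>\<omega>. e \<omega> + c *\<^sub>R d \<omega>"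
  assumes M: "prob_space M" and Q: "quantizer N Q \<delta>" and \<xi>: "\<xi> \<in> measurable M N"
    and em: "e \<in> borel_measurable M" and dm: "d \<in> borel_measurable M"
    and ei: "integrable M (\<lambda>\<omega>. (norm (e \<omega>))\<^sup>2)" and di: "integrable M (\<lambda>\<omega>. (norm (d \<omega>))\<^sup>2)"
    and orth: "(\<integral>\<omega>. inner (e \<omega>) (d \<omega>) \<partial>M) = 0"
    and indep: "distr M (N \<Otimes>\<^sub>M borel) (\<lambda>\<omega>. (\<xi> \<omega>, v \<omega>)) = N \<Otimes>\<^sub>M distr M borel v"
  shows "integrable M (\<lambda>\<omega>. (norm (v \<omega> - Q (\<xi> \<omega>) (v \<omega>)))\<^sup>2)"
    and "(\<integral>\<omega>. (norm (v \<omega> - Q (\<xi> \<omega>) (v \<omega>)))\<^sup>2 \<partial>M)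
           \<le> (1 - \<delta>) * ((\<integral>\<omega>. (norm (e \<omega>))\<^sup>2 \<partial>M) + c\<^sup>2 * (\<integral>\<omega>. (norm (d \<omega>))\<^sup>2 \<partial>M))"
proof -
  from Q have Qm: "(\<lambda>(r, y). Q r y) \<in> borel_measurable (N \<Otimes>\<^sub>M borel)" and q: "0 \<le> 1 - \<delta>"
    unfolding quantizer_def by auto
  have vm: "v \<in> borel_measurable M" unfolding v_def using em dm by measurable
  have vi: "integrable M (\<lambda>\<omega>. (norm (v \<omega>))\<^sup>2)"
    and vint: "(\<integral>\<omega>. (norm (v \<omega>))\<^sup>2 \<partial>M)
                 = (\<integral>\<omega>. (norm (e \<omega>))\<^sup>2 \<partial>M) + c\<^sup>2 * (\<integral>\<omega>. (norm (d \<omega>))\<^sup>2 \<partial>M)"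
    unfolding v_def using integral_norm_add_scaleR_orthogonal[OF em dm ei di orth] by auto
  have "(\<lambda>\<omega>. Q (\<xi> \<omega>) (v \<omega>)) \<in> borel_measurable M"
    using measurable_comp[OF measurable_Pair[OF \<xi> vm] Qm] by (simp add: o_def)
  then have "(\<lambda>\<omega>. (norm (v \<omega> - Q (\<xi> \<omega>) (v \<omega>)))\<^sup>2) \<in> borel_measurable M"
    using vm by measurable
  moreover have "(\<integral>\<^sup>+\<omega>. ennreal ((norm (v \<omega> - Q (\<xi> \<omega>) (v \<omega>)))\<^sup>2) \<partial>M)
      \<le> ennreal ((1 - \<delta>) * (\<integral>\<omega>. (norm (v \<omega>))\<^sup>2 \<partial>M))"
  proof -
    have "integrable M (\<lambda>\<omega>. (1 - \<delta>) * (norm (v \<omega>))\<^sup>2)" using vi by simp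
    then have "(\<integral>\<^sup>+\<omega>. ennreal ((1 - \<delta>) * (norm (v \<omega>))\<^sup>2) \<partial>M)
        = ennreal ((1 - \<delta>) * (\<integral>\<omega>. (norm (v \<omega>))\<^sup>2 \<partial>M))"
      using q by (simp add: nn_integral_eq_integral)
    with quantizer_nn_integral_error_le[OF M Q \<xi> vm indep] show ?thesis by simp
  qed
  moreover have "0 \<le> (1 - \<delta>) * (\<integral>\<omega>. (norm (v \<omega>))\<^sup>2 \<partial>M)" using q by simp
  ultimately show "integrable M (\<lambda>\<omega>. (norm (v \<omega> - Q (\<xi> \<omega>) (v \<omega>)))\<^sup>2)"
    and "(\<integral>\<omega>. (norm (v \<omega> - Q (\<xi> \<omega>) (v \<omega>)))\<^sup>2 \<partial>M)
           \<le> (1 - \<delta>) * ((\<integral>\<omega>. (norm (e \<omega>))\<^sup>2 \<partial>M) + c\<^sup>2 * (\<integral>\<omega>. (norm (d \<omega>))\<^sup>2 \<partial>M))"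
    unfolding vint[symmetric] by (simp_all add: integrable_and_integral_le_of_nn_integral_le)
qed

lemma quantized_error_le_convolution:
  fixes Q :: "'r \<Rightarrow> 'a::euclidean_space \<Rightarrow> 'a" and \<xi> :: "nat \<Rightarrow> 'w \<Rightarrow> 'r"
    and e d :: "nat \<Rightarrow> 'w \<Rightarrow> 'a" and c :: real
  defines "v \<equiv> \<lambda>t \<omega>. e t \<omega> + c *\<^sub>R d t \<omega>"
  assumes M: "prob_space M" and Q: "quantizer N Q \<delta>" and \<xi>: "\<And>t. \<xi> t \<in> measurable M N"
    and e0: "\<And>\<omega>. e 0 \<omega> = 0"
    and e_Suc: "\<And>t \<omega>. e (Suc t) \<omega> = v t \<omega> - Q (\<xi> t \<omega>) (v t \<omega>)"
    and em: "\<And>t. e t \<in> borel_measurable M" and dm: "\<And>t. d t \<in> borel_measurable M"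
    and di: "\<And>t. integrable M (\<lambda>\<omega>. (norm (d t \<omega>))\<^sup>2)"
    and orth: "\<And>t. (\<integral>\<omega>. inner (e t \<omega>) (d t \<omega>) \<partial>M) = 0"
    and indep: "\<And>t. distr M (N \<Otimes>\<^sub>M borel) (\<lambda>\<omega>. (\<xi> t \<omega>, v t \<omega>)) = N \<Otimes>\<^sub>M distr M borel (v t)"
  shows "(\<integral>\<omega>. (norm (e t \<omega>))\<^sup>2 \<partial>M)
           \<le> (\<Sum>j<t. (1 - \<delta>) ^ (t - j) * (c\<^sup>2 * (\<integral>\<omega>. (norm (d j \<omega>))\<^sup>2 \<partial>M)))"
proof -
  have step: "integrable M (\<lambda>\<omega>. (norm (e (Suc t) \<omega>))\<^sup>2)
      \<and> (\<integral>\<omega>. (norm (e (Suc t) \<omega>))\<^sup>2 \<partial>M)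
          \<le> (1 - \<delta>) * ((\<integral>\<omega>. (norm (e t \<omega>))\<^sup>2 \<partial>M) + c\<^sup>2 * (\<integral>\<omega>. (norm (d t \<omega>))\<^sup>2 \<partial>M))"
    if "integrable M (\<lambda>\<omega>. (norm (e t \<omega>))\<^sup>2)" for t
    using quantized_error_step[OF M Q \<xi> em dm that di orth indep[unfolded v_def]]
    by (simp add: e_Suc v_def)
  have "integrable M (\<lambda>\<omega>. (norm (e t \<omega>))\<^sup>2)" for t
    by (induction t) (use step in \<open>auto simp: e0\<close>)
  with step show ?thesis
    using Q by (intro linear_recurrence_le_convolution) (auto simp: e0 quantizer_def)
qed

theorem mainTheorem9:
  fixes M :: "'w measure" and N :: "'r measure"
    and Qs :: "'r \<Rightarrow> 'a::euclidean_space \<Rightarrow> 'a"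
    and \<delta>s \<eta>g :: real
    and \<Delta> x xh :: "nat \<Rightarrow> 'w \<Rightarrow> 'a"
    and \<xi> :: "nat \<Rightarrow> 'w \<Rightarrow> 'r"
    and T :: nat
  assumes "prob_space M"
    and "quantizer N Qs \<delta>s" and "unbiased_quantizer N Qs"
    and "\<eta>g > 0"
    and "\<forall>t. \<Delta> t \<in> borel_measurable M \<and> integrable M (\<lambda>\<omega>. (norm (\<Delta> t \<omega>))\<^sup>2)"
    and "\<forall>t \<omega>. x (Suc t) \<omega> = x t \<omega> + \<eta>g *\<^sub>R \<Delta> t \<omega>"
    and "\<forall>t \<omega>. xh (Suc t) \<omega> = xh t \<omega> + Qs (\<xi> t \<omega>) (x (Suc t) \<omega> - xh t \<omega>)"
    and "\<forall>\<omega>. xh 0 \<omega> = x 0 \<omega>"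
    and "\<forall>t. \<xi> t \<in> measurable M N \<and> distr M N (\<xi> t) = N"
    and "\<forall>t. (\<lambda>\<omega>. x (Suc t) \<omega> - xh t \<omega>) \<in> borel_measurable M"
    and "\<forall>t. distr M (N \<Otimes>\<^sub>M borel) (\<lambda>\<omega>. (\<xi> t \<omega>, x (Suc t) \<omega> - xh t \<omega>))
             = N \<Otimes>\<^sub>M distr M borel (\<lambda>\<omega>. x (Suc t) \<omega> - xh t \<omega>)"
    and "\<forall>t. (\<integral>\<omega>. inner (x t \<omega> - xh t \<omega>) (\<Delta> t \<omega>) \<partial>M) = 0"
    and "T \<ge> 1"
  shows "(\<Sum>t<T. \<integral>\<omega>. (norm (x t \<omega> - xh t \<omega>))\<^sup>2 \<partial>M)
           \<le> \<eta>g\<^sup>2 * (\<Sum>s=1..T-1. (1 - \<delta>s) ^ s) * (\<Sum>t<T-1. \<integral>\<omega>. (norm (\<Delta> t \<omega>))\<^sup>2 \<partial>M)"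
proof -
  note A = assms
  define e where "e t \<omega> = x t \<omega> - xh t \<omega>" for t \<omega>
  have v: "x (Suc t) \<omega> - xh t \<omega> = e t \<omega> + \<eta>g *\<^sub>R \<Delta> t \<omega>" for t \<omega>
    using A(6) by (simp add: e_def algebra_simps)
  have em: "e t \<in> borel_measurable M" for t
  proof -
    have "e t = (\<lambda>\<omega>. (x (Suc t) \<omega> - xh t \<omega>) - \<eta>g *\<^sub>R \<Delta> t \<omega>)"
      using A(6) by (simp add: e_def fun_eq_iff)
    moreover have "(\<lambda>\<omega>. x (Suc t) \<omega> - xh t \<omega>) \<in> borel_measurable M" "\<Delta> t \<in> borel_measurable M"
      using A(5,10) by auto
    ultimately show ?thesis by simp
  qed
  have "(\<integral>\<omega>. (norm (e t \<omega>))\<^sup>2 \<partial>M)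
      \<le> (\<Sum>j<t. (1 - \<delta>s) ^ (t - j) * (\<eta>g\<^sup>2 * (\<integral>\<omega>. (norm (\<Delta> j \<omega>))\<^sup>2 \<partial>M)))" for t
  proof (rule quantized_error_le_convolution[OF A(1,2) _ _ _ em])
    show "e (Suc t) \<omega> = (e t \<omega> + \<eta>g *\<^sub>R \<Delta> t \<omega>) - Qs (\<xi> t \<omega>) (e t \<omega> + \<eta>g *\<^sub>R \<Delta> t \<omega>)" for t \<omega>
      using A(7) v[of t \<omega>] by (simp add: e_def algebra_simps)
  qed (use A(5,8,9,11,12) v in \<open>auto simp: e_def\<close>)
  then have "(\<Sum>t<T. \<integral>\<omega>. (norm (e t \<omega>))\<^sup>2 \<partial>M)
      \<le> (\<Sum>t<T. \<Sum>j<t. (1 - \<delta>s) ^ (t - j) * (\<eta>g\<^sup>2 * (\<integral>\<omega>. (norm (\<Delta> j \<omega>))\<^sup>2 \<partial>M)))"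
    by (rule sum_mono)
  also have "\<dots> \<le> (\<Sum>s=1..T-1. (1 - \<delta>s) ^ s) * (\<Sum>j<T-1. \<eta>g\<^sup>2 * (\<integral>\<omega>. (norm (\<Delta> j \<omega>))\<^sup>2 \<partial>M))"
    using A(2,13) by (intro sum_convolution_le) (auto simp: quantizer_def)
  finally show ?thesis
    by (simp add: e_def sum_distrib_left[symmetric] mult_ac)
qed

end
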